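(* Let $R$ be a valuation domain of cardinality $\aleph_1$ and $J/R$ a type with $J$ not countably generated. If $J/R$ is essentially countable, then (i) $\Gamma'(J/R)=0$ and (ii) $\Gamma(J/R)=1$.
   Context: A valuation domain is an integral domain whose ideals are linearly ordered; $Q$ is its quotient field, $R^*$ its group of units. For $x,y\in R$, $x\equiv y \pmod r$ means $x-y\in rR$. A type $J/R$ is given by an $R$-submodule $J$ of $Q$ with $R\subseteq J$; write $J=\bigcup_{\sigma<\omega_1} r_\sigma^{-1}R$ with nonzero $r_\sigma\in R$, $r_\tau\mid r_\sigma$ and $r_\sigma\nmid r_\tau$ for $\tau<\sigma$. The type is essentially uncountable if for every $\sigma$ there is $\tau>\sigma$ with $r_\sigma R/r_\tau R$ uncountable, and essentially countable otherwise. A cub is a closed unbounded subset of $\omega_1$. $D(\omega_1)$ is the Boolean algebra of subsets of $\omega_1$ modulo the relation $S_1\sim S_2$ iff $S_1\cap C=S_2\cap C$ for some cub $C$; $\tilde S$ is the class of $S$; $0$ is the class of sets disjoint from a cub and $1$ the class of sets containing a cub. $\Gamma(J/R)=\tilde S$ where $S$ is the set of limit ordinals $\delta<\omega_1$ such that $R/\bigcap_{\sigma<\delta} r_\sigma R$ is not complete in the metrizable linear topology having the submodules $r_\sigma R/\bigcap_{\sigma'<\delta}r_{\sigma'}R$ ($\sigma<\delta$) as a basis of neighbourhoods of $0$. For a limit $\delta<\omega_1$, ${\cal T}^\delta_{J/R}$ is the set of sequences $\langle u_\sigma:\sigma<\delta\rangle$ with $u_\sigma\in R^*$ and $u_\tau-u_\sigma\in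 r_\sigma R$ for all $\sigma<\tau<\delta$. An $\omega_1$-filtration of $R$ by subrings is an increasing chain $\{N_\alpha:\alpha<\omega_1\}$ of countable subrings with $R=\bigcup_\alpha N_\alpha$ and $N_\alpha=\bigcup_{\beta<\alpha}N_\beta$ for limit $\alpha$. Fixing such a filtration, $\Gamma'(J/R)=\tilde{E'}$ where $E'$ is the set of limit $\delta<\omega_1$ for which there exists $\langle u_\sigma:\sigma<\delta\rangle\in{\cal T}^\delta_{J/R}$ such that for every $f\in R^*$ there is $\sigma<\delta$ such that there is no $n\in N_\delta$ with $u_\sigma f\equiv n\pmod{r_\sigma}$. Both $\Gamma$ and $\Gamma'$ are independent of the choices of the $r_\sigma$ and of the filtration. *)

theory Defs
  imports Main "HOL-Library.Countable_Set" "HOL-Computational_Algebra.Fraction_Field"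
begin

section \<open>The ring R (the whole type 'a) and its quotient field Q = 'a fract\<close>

definition emb :: "'a::idom \<Rightarrow> 'a fract" where
  "emb a = Fract a 1"

definition is_ideal :: "'a::comm_ring_1 set \<Rightarrow> bool" where
  "is_ideal I \<longleftrightarrow> 0 \<in> I \<and> (\<forall>x\<in>I. \<forall>y\<in>I. x + y \<in> I) \<and> (\<forall>c. \<forall>x\<in>I. c * x \<in> I)"

definition valuation_domain :: "'a::idom itself \<Rightarrow> bool" where
  "valuation_domain _ \<longleftrightarrow>
     (\<forall>I J :: 'a set. is_ideal I \<longrightarrow> is_ideal J \<longrightarrow> I \<subseteq> J \<or> J \<subseteq> I)"

definition principal :: "'a::comm_ring_1 \<Rightarrow> 'a set" where
  "principal r = {r * c | c. True}"

definition R_submodule :: "'a::idom fract set \<Rightarrow> bool" where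
  "R_submodule M \<longleftrightarrow> 0 \<in> M \<and> (\<forall>x\<in>M. \<forall>y\<in>M. x + y \<in> M) \<and> (\<forall>a. \<forall>x\<in>M. emb a * x \<in> M)"

text \<open>A type J/R: an R-submodule J of Q with R contained in J.\<close>
definition is_type :: "'a::idom fract set \<Rightarrow> bool" where
  "is_type J \<longleftrightarrow> R_submodule J \<and> range emb \<subseteq> J"

definition R_span :: "'a::idom fract set \<Rightarrow> 'a fract set" where
  "R_span G = {(\<Sum>g\<in>F. emb (c g) * g) | F c. finite F \<and> F \<subseteq> G}"

definition countably_generated :: "'a::idom fract set \<Rightarrow> bool" where
  "countably_generated M \<longleftrightarrow> (\<exists>G. countable G \<and> G \<subseteq> M \<and> R_span G = M)"

definition inv_principal :: "'a::idom \<Rightarrow> 'a fract set" where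
  "inv_principal r = {inverse (emb r) * emb a | a. True}"

text \<open>A well-ordered type is (order-isomorphic to) omega_1 iff it is uncountable and
  all its proper initial segments are countable.\<close>
definition is_omega1 :: "'w::wellorder itself \<Rightarrow> bool" where
  "is_omega1 _ \<longleftrightarrow> uncountable (UNIV :: 'w set) \<and> (\<forall>x::'w. countable {y. y < x})"

text \<open>Limit ordinal (nonzero, not a successor).\<close>
definition is_limit :: "'w::wellorder \<Rightarrow> bool" where
  "is_limit \<delta> \<longleftrightarrow> (\<exists>y. y < \<delta>) \<and> (\<forall>y<\<delta>. \<exists>z. y < z \<and> z < \<delta>)"

definition closed_set :: "'w::wellorder set \<Rightarrow> bool" where
  "closed_set C \<longleftrightarrow>
     (\<forall>\<delta>. (\<exists>y. y < \<delta>) \<and> (\<forall>\<alpha><\<delta>. \<exists>\<beta>\<in>C. \<alpha> < \<beta> \<and> \<beta> < \<delta>) \<longrightarrow> \<delta> \<in> C)"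

definition unbounded_set :: "'w::wellorder set \<Rightarrow> bool" where
  "unbounded_set C \<longleftrightarrow> (\<forall>\<alpha>. \<exists>\<beta>\<in>C. \<alpha> \<le> \<beta>)"

definition cub :: "'w::wellorder set \<Rightarrow> bool" where
  "cub C \<longleftrightarrow> closed_set C \<and> unbounded_set C"

text \<open>S1 ~ S2 in D(omega_1).  The class of S is 0 iff S ~ {}, and 1 iff S ~ UNIV.\<close>
definition cub_equiv :: "'w::wellorder set \<Rightarrow> 'w set \<Rightarrow> bool" where
  "cub_equiv S1 S2 \<longleftrightarrow> (\<exists>C. cub C \<and> S1 \<inter> C = S2 \<inter> C)"

definition type_repr :: "'a::idom fract set \<Rightarrow> ('w::wellorder \<Rightarrow> 'a) \<Rightarrow> bool" where
  "type_repr J r \<longleftrightarrow>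
     (\<forall>\<sigma>. r \<sigma> \<noteq> 0) \<and>
     (\<forall>\<sigma> \<tau>. \<tau> < \<sigma> \<longrightarrow> r \<tau> dvd r \<sigma> \<and> \<not> r \<sigma> dvd r \<tau>) \<and>
     J = (\<Union>\<sigma>. inv_principal (r \<sigma>))"

definition quot_set :: "'a::comm_ring_1 set \<Rightarrow> 'a set \<Rightarrow> 'a set set" where
  "quot_set A I = (\<lambda>x. {y \<in> A. x - y \<in> I}) ` A"

definition essentially_uncountable :: "('w::wellorder \<Rightarrow> 'a::idom) \<Rightarrow> bool" where
  "essentially_uncountable r \<longleftrightarrow>
     (\<forall>\<sigma>. \<exists>\<tau>>\<sigma>. uncountable (quot_set (principal (r \<sigma>)) (principal (r \<tau>))))"

definition essentially_countable :: "('w::wellorder \<Rightarrow> 'a::idom) \<Rightarrow> bool" where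
  "essentially_countable r \<longleftrightarrow> \<not> essentially_uncountable r"

text \<open>Completeness of R/K (K = intersection of the ideals in B) in the metrizable linear
  topology with the (countably many) submodules I/K, I in B, as a basis of neighbourhoods
  of 0: every Cauchy sequence converges.  Sequences in R/K are lifted to R; since every
  I in B contains K this is the same notion.\<close>
definition lin_top_complete :: "'a::comm_ring_1 set set \<Rightarrow> bool" where
  "lin_top_complete B \<longleftrightarrow>
     (\<forall>x :: nat \<Rightarrow> 'a.
        (\<forall>I\<in>B. \<exists>N. \<forall>m\<ge>N. \<forall>n\<ge>N. x m - x n \<in> I) \<longrightarrow>
        (\<exists>y. \<forall>I\<in>B. \<exists>N. \<forall>n\<ge>N. x n - y \<in> I))"

definition Gamma_set :: "('w::wellorder \<Rightarrow> 'a::idom) \<Rightarrow> 'w set" where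
  "Gamma_set r = {\<delta>. is_limit \<delta> \<and> \<not> lin_top_complete {principal (r \<sigma>) | \<sigma>. \<sigma> < \<delta>}}"

definition T_seqs :: "('w::wellorder \<Rightarrow> 'a::idom) \<Rightarrow> 'w \<Rightarrow> ('w \<Rightarrow> 'a) set" where
  "T_seqs r \<delta> = {u. (\<forall>\<sigma><\<delta>. u \<sigma> dvd 1) \<and>
                     (\<forall>\<sigma> \<tau>. \<sigma> < \<tau> \<and> \<tau> < \<delta> \<longrightarrow> u \<tau> - u \<sigma> \<in> principal (r \<sigma>))}"

definition is_subring :: "'a::comm_ring_1 set \<Rightarrow> bool" where
  "is_subring A \<longleftrightarrow> 0 \<in> A \<and> 1 \<in> A \<and>
     (\<forall>x\<in>A. \<forall>y\<in>A. x + y \<in> A \<and> x - y \<in> A \<and> x * y \<in> A)"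

definition omega1_filtration :: "('w::wellorder \<Rightarrow> 'a::comm_ring_1 set) \<Rightarrow> bool" where
  "omega1_filtration N \<longleftrightarrow>
     (\<forall>\<alpha>. countable (N \<alpha>) \<and> is_subring (N \<alpha>)) \<and>
     (\<forall>\<alpha> \<beta>. \<alpha> \<le> \<beta> \<longrightarrow> N \<alpha> \<subseteq> N \<beta>) \<and>
     (\<Union>\<alpha>. N \<alpha>) = UNIV \<and>
     (\<forall>\<alpha>. is_limit \<alpha> \<longrightarrow> N \<alpha> = (\<Union>\<beta>\<in>{\<beta>. \<beta> < \<alpha>}. N \<beta>))"

definition Gamma'_set :: "('w::wellorder \<Rightarrow> 'a::idom) \<Rightarrow> ('w \<Rightarrow> 'a set) \<Rightarrow> 'w set" where
  "Gamma'_set r N = {\<delta>. is_limit \<delta> \<and>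
     (\<exists>u\<in>T_seqs r \<delta>. \<forall>f. f dvd 1 \<longrightarrow>
        (\<exists>\<sigma><\<delta>. \<not> (\<exists>n\<in>N \<delta>. u \<sigma> * f - n \<in> principal (r \<sigma>))))}"

end

theory Submission
  imports Defs
begin

(* By essential countability there is sigma0 such that r(sigma0)R / r(tau)R is countable for all
   tau > sigma0.
   Gamma' = 0: on the cub of those delta > sigma0 for which N(delta) contains representatives of
   r(sigma0)R / r(sigma)R for every sigma < delta, each u in T(delta) is matched by the unit
   f = u(sigma0)^-1, because u(sigma) f - 1 lies in r(sigma0)R and is therefore congruent
   mod r(sigma) to an element of N(delta).
   Gamma = 1: for a limit delta > sigma0 choose a cofinal sequence sigma0 = s0 < s1 < ... and put
   d(n) = r(s n). Completeness would give every series sum_(n in b) d(n), b a set of naturals,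
   a limit y(b) in d(0)R. For b <> b' the first index j at which b and b' differ shows that
   y(b) and y(b') are incongruent mod r(delta), since otherwise d(j+1) divides d(j). Hence
   r(sigma0)R / r(delta)R would be uncountable. *)

lemma principal_iff_dvd: "x \<in> principal r \<longleftrightarrow> r dvd x"
  unfolding principal_def dvd_def by (auto simp: mult.commute)

lemma uncountable_UNIV_nat_set: "uncountable (UNIV :: nat set set)"
proof
  assume "countable (UNIV :: nat set set)"
  then obtain f :: "nat \<Rightarrow> nat set" where "range f = UNIV"
    by (metis uncountable_def UNIV_not_empty)
  then show False
    using Cantors_theorem[of "UNIV :: nat set"] by simp
qed

section \<open>Countable sets and closed unbounded sets in omega_1\<close>

lemma omega1_countable_atMost:
  assumes "is_omega1 TYPE('w::wellorder)"
  shows "countable {..a::'w}"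
proof -
  have "{..a} = insert a {y. y < a}" by auto
  then show ?thesis using assms unfolding is_omega1_def by simp
qed

lemma omega1_countable_bounded:
  assumes "is_omega1 TYPE('w::wellorder)" and "countable (A :: 'w set)"
  shows "\<exists>b. \<forall>a\<in>A. a < b"
proof -
  have "countable (\<Union>a\<in>A. {..a})"
    using assms by (simp add: omega1_countable_atMost)
  moreover have "uncountable (UNIV :: 'w set)"
    using assms(1) unfolding is_omega1_def by simp
  ultimately obtain b where "b \<notin> (\<Union>a\<in>A. {..a})" by (metis UNIV_eq_I)
  then show ?thesis by (auto simp: not_le)
qed

lemma omega1_filtration_countable_subset:
  assumes om: "is_omega1 TYPE('w::wellorder)"
    and filt: "omega1_filtration (N :: 'w \<Rightarrow> 'a::comm_ring_1 set)"
    and "countable A"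
  shows "\<exists>\<beta>. A \<subseteq> N \<beta>"
proof -
  have mono: "\<forall>\<alpha> \<beta>. \<alpha> \<le> \<beta> \<longrightarrow> N \<alpha> \<subseteq> N \<beta>"
    using filt unfolding omega1_filtration_def by (elim conjE)
  have exhaust: "(\<Union>\<alpha>. N \<alpha>) = UNIV"
    using filt unfolding omega1_filtration_def by (elim conjE)
  define h where "h y = (SOME \<alpha>. y \<in> N \<alpha>)" for y
  have h: "y \<in> N (h y)" for y
    unfolding h_def by (rule someI_ex) (use exhaust in blast)
  obtain \<beta> where "\<forall>\<alpha>\<in>h ` A. \<alpha> < \<beta>"
    using omega1_countable_bounded[OF om countable_image[OF \<open>countable A\<close>]] by blast
  then have "A \<subseteq> N \<beta>"
    using h mono by (blast dest: less_imp_le)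
  then show ?thesis ..
qed

lemma omega1_least_upper_bound:
  fixes a :: "nat \<Rightarrow> 'w::wellorder"
  assumes "is_omega1 TYPE('w)"
  shows "\<exists>\<delta>. (\<forall>n. a n \<le> \<delta>) \<and> (\<forall>\<beta><\<delta>. \<exists>n. \<beta> < a n)"
proof -
  obtain b where "\<forall>n. a n < b"
    using omega1_countable_bounded[OF assms, of "range a"] by auto
  then have "\<forall>n. a n \<le> b"
    by (simp add: less_imp_le)
  then have "\<forall>n. a n \<le> (LEAST z. \<forall>n. a n \<le> z)"
    by (rule LeastI)
  moreover have "\<exists>n. \<beta> < a n" if "\<beta> < (LEAST z. \<forall>n. a n \<le> z)" for \<beta>
  proof -
    have "\<not> (\<forall>n. a n \<le> \<beta>)"
      using not_less_Least[OF that] .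
    then show ?thesis by (auto simp: not_le)
  qed
  ultimately show ?thesis by blast
qed

lemma omega1_cub_closure_points:
  assumes om: "is_omega1 TYPE('w::wellorder)"
  shows "cub {\<delta>::'w. \<sigma>0 < \<delta> \<and> (\<forall>\<alpha><\<delta>. g \<alpha> < \<delta>)}" (is "cub ?C")
  unfolding cub_def
proof
  show "closed_set ?C"
    unfolding closed_set_def
  proof (intro allI impI)
    fix \<delta> :: 'w
    assume "(\<exists>y. y < \<delta>) \<and> (\<forall>\<alpha><\<delta>. \<exists>\<beta>\<in>?C. \<alpha> < \<beta> \<and> \<beta> < \<delta>)"
    then obtain y where "y < \<delta>"
      and cofinal: "\<And>\<alpha>. \<alpha> < \<delta> \<Longrightarrow> \<exists>\<beta>\<in>?C. \<alpha> < \<beta> \<and> \<beta> < \<delta>"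
      by blast
    have "g \<alpha> < \<delta> \<and> \<sigma>0 < \<delta>" if \<alpha>: "\<alpha> < \<delta>" for \<alpha>
    proof -
      obtain \<beta> where "\<beta> \<in> ?C" "\<alpha> < \<beta>" "\<beta> < \<delta>"
        using cofinal[OF \<alpha>] by blast
      then have "g \<alpha> < \<beta>" "\<sigma>0 < \<beta>" by simp_all
      with \<open>\<beta> < \<delta>\<close> show ?thesis by (blast intro: less_trans)
    qed
    with \<open>y < \<delta>\<close> show "\<delta> \<in> ?C" by blast
  qed
  show "unbounded_set ?C"
    unfolding unbounded_set_def
  proof
    fix \<alpha> :: 'w
    have "\<exists>b. p < b \<and> (\<forall>x\<le>p. g x < b)" for p
    proof -
      have "countable (insert p (g ` {..p}))"
        by (simp add: omega1_countable_atMost[OF om])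
      then obtain b where "\<forall>x\<in>insert p (g ` {..p}). x < b"
        using omega1_countable_bounded[OF om] by blast
      then show ?thesis by auto
    qed
    then obtain nx where nx: "\<And>p. p < nx p" "\<And>p x. x \<le> p \<Longrightarrow> g x < nx p"
      by metis
    obtain a0 where a0: "\<alpha> < a0" "\<sigma>0 < a0"
    proof -
      have "countable {\<alpha>, \<sigma>0}" by simp
      then obtain b where "\<forall>x\<in>{\<alpha>, \<sigma>0}. x < b"
        using omega1_countable_bounded[OF om] by blast
      then show thesis using that[of b] by simp
    qed
    obtain \<delta> where ub: "\<And>n. (nx ^^ n) a0 \<le> \<delta>"
      and lub: "\<And>\<beta>. \<beta> < \<delta> \<Longrightarrow> \<exists>n. \<beta> < (nx ^^ n) a0"
      using omega1_least_upper_bound[OF om, of "\<lambda>n. (nx ^^ n) a0"] by blast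
    have "g \<beta> < \<delta>" if \<beta>: "\<beta> < \<delta>" for \<beta>
    proof -
      obtain n where "\<beta> < (nx ^^ n) a0" using lub[OF \<beta>] by blast
      then have "g \<beta> < (nx ^^ Suc n) a0" using nx(2) by simp
      then show ?thesis using ub by (rule less_le_trans)
    qed
    moreover have "a0 \<le> \<delta>"
      using ub[of 0] by simp
    then have "\<alpha> \<le> \<delta>" "\<sigma>0 < \<delta>"
      using a0 by simp_all
    ultimately show "\<exists>\<beta>\<in>?C. \<alpha> \<le> \<beta>" by auto
  qed
qed

lemma omega1_limit_cofinal_seq:
  fixes \<delta> :: "'w::wellorder"
  assumes om: "is_omega1 TYPE('w)" and lim: "is_limit \<delta>" and "\<sigma>0 < \<delta>"
  obtains s :: "nat \<Rightarrow> 'w" where "s 0 = \<sigma>0" "strict_mono s" "\<And>n. s n < \<delta>"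
    "\<And>\<beta>. \<beta> < \<delta> \<Longrightarrow> \<exists>n. \<beta> < s n"
proof -
  define e where "e = from_nat_into {y. y < \<delta>}"
  have "{y. y < \<delta>} \<noteq> {}"
    using \<open>\<sigma>0 < \<delta>\<close> by blast
  moreover have "countable {y. y < \<delta>}"
    using om unfolding is_omega1_def by blast
  ultimately have e: "range e = {y. y < \<delta>}"
    unfolding e_def by (rule range_from_nat_into)
  have "\<forall>p. \<exists>z. p < \<delta> \<longrightarrow> p < z \<and> z < \<delta>"
    using lim unfolding is_limit_def by blast
  then obtain nx where nx: "\<And>p. p < \<delta> \<Longrightarrow> p < nx p \<and> nx p < \<delta>"
    using choice[of "\<lambda>p z. p < \<delta> \<longrightarrow> p < z \<and> z < \<delta>"] by blast
  define s where "s = rec_nat \<sigma>0 (\<lambda>n p. nx (max p (e n)))"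
  have s_Suc: "s (Suc n) = nx (max (s n) (e n))" for n
    by (simp add: s_def)
  have e_below: "e n < \<delta>" for n
    using e rangeI[of e n] by simp
  have below: "s n < \<delta>" for n
  proof (induction n)
    case 0
    show ?case using \<open>\<sigma>0 < \<delta>\<close> by (simp add: s_def)
  next
    case (Suc n)
    then have "max (s n) (e n) < \<delta>" using e_below by simp
    then show ?case using nx unfolding s_Suc by blast
  qed
  have step: "s n < s (Suc n) \<and> e n < s (Suc n)" for n
  proof -
    have "max (s n) (e n) < nx (max (s n) (e n))"
      using nx[of "max (s n) (e n)"] below[of n] e_below[of n] by simp
    then show ?thesis unfolding s_Suc by simp
  qed
  show thesis
  proof
    show "s 0 = \<sigma>0" by (simp add: s_def)
    show "strict_mono s" using step by (simp add: strict_mono_Suc_iff)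
    show "\<exists>n. \<beta> < s n" if \<beta>: "\<beta> < \<delta>" for \<beta>
    proof -
      obtain n where "\<beta> = e n"
        using e \<beta> by blast
      then show ?thesis using step by blast
    qed
  qed (fact below)
qed

section \<open>Gamma\<close>

lemma lin_top_completeD:
  fixes x :: "nat \<Rightarrow> 'a::comm_ring_1"
  assumes "lin_top_complete B" and "\<forall>I\<in>B. \<exists>N. \<forall>m\<ge>N. \<forall>n\<ge>N. x m - x n \<in> I"
  shows "\<exists>y. \<forall>I\<in>B. \<exists>N. \<forall>n\<ge>N. x n - y \<in> I"
  using assms unfolding lin_top_complete_def by blast

lemma lin_top_complete_cofinal_subfamily:
  assumes "lin_top_complete B" and "B' \<subseteq> B" and cofinal: "\<And>I. I \<in> B \<Longrightarrow> \<exists>I'\<in>B'. I' \<subseteq> I"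
  shows "lin_top_complete B'"
  unfolding lin_top_complete_def
proof (intro allI impI)
  fix x :: "nat \<Rightarrow> 'a"
  assume cauchy: "\<forall>I\<in>B'. \<exists>N. \<forall>m\<ge>N. \<forall>n\<ge>N. x m - x n \<in> I"
  have "\<forall>I\<in>B. \<exists>N. \<forall>m\<ge>N. \<forall>n\<ge>N. x m - x n \<in> I"
  proof
    fix I assume "I \<in> B"
    then obtain I' where "I' \<in> B'" "I' \<subseteq> I"
      using cofinal by blast
    moreover obtain N where "\<forall>m\<ge>N. \<forall>n\<ge>N. x m - x n \<in> I'"
      using cauchy \<open>I' \<in> B'\<close> by blast
    ultimately show "\<exists>N. \<forall>m\<ge>N. \<forall>n\<ge>N. x m - x n \<in> I" by auto
  qed
  then obtain y where "\<forall>I\<in>B. \<exists>N. \<forall>n\<ge>N. x n - y \<in> I"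
    using lin_top_completeD[OF assms(1)] by blast
  then show "\<exists>y. \<forall>I\<in>B'. \<exists>N. \<forall>n\<ge>N. x n - y \<in> I"
    using \<open>B' \<subseteq> B\<close> by blast
qed

lemma uncountable_quot_set_if_incongruent:
  fixes y :: "'i \<Rightarrow> 'a::comm_ring_1"
  assumes "uncountable (UNIV :: 'i set)" and "\<And>i. y i \<in> A" and "0 \<in> I"
    and incongruent: "\<And>i j. y i - y j \<in> I \<Longrightarrow> i = j"
  shows "uncountable (quot_set A I)"
proof
  define cls where "cls x = {z \<in> A. x - z \<in> I}" for x
  have "inj (cls \<circ> y)"
  proof (rule injI)
    fix i j
    assume "(cls \<circ> y) i = (cls \<circ> y) j"
    moreover have "y j \<in> cls (y j)"
      using assms(2,3) unfolding cls_def by simp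
    ultimately have "y j \<in> cls (y i)" by simp
    then show "i = j"
      unfolding cls_def by (simp add: incongruent)
  qed
  assume "countable (quot_set A I)"
  moreover have "range (cls \<circ> y) \<subseteq> quot_set A I"
    unfolding quot_set_def cls_def using assms(2) by auto
  ultimately have "countable (range (cls \<circ> y))"
    by (rule countable_subset[rotated])
  then have "countable (UNIV :: 'i set)"
    using \<open>inj (cls \<circ> y)\<close> by (rule countable_image_inj_on)
  with assms(1) show False ..
qed

lemma dvd_partial_sum_diff:
  fixes d :: "nat \<Rightarrow> 'a::comm_ring_1"
  assumes mono: "\<And>n m. n \<le> m \<Longrightarrow> d n dvd d m" and "N \<le> k"
  shows "d N dvd (\<Sum>n<k. c n * d n) - (\<Sum>n<N. c n * d n)"
proof -
  have "(\<Sum>n<k. c n * d n) - (\<Sum>n<N. c n * d n) = (\<Sum>n\<in>{N..<k}. c n * d n)"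
    using \<open>N \<le> k\<close> by (simp add: sum_diff_nat_ivl lessThan_atLeast0)
  also have "d N dvd \<dots>"
    by (rule dvd_sum) (simp add: mono dvd_mult)
  finally show ?thesis .
qed

lemma lin_top_complete_series_limit:
  fixes d :: "nat \<Rightarrow> 'a::comm_ring_1"
  assumes mono: "\<And>n m. n \<le> m \<Longrightarrow> d n dvd d m"
    and complete: "lin_top_complete (range (\<lambda>n. principal (d n)))"
  shows "\<exists>y. \<forall>n. d n dvd y - (\<Sum>i<n. c i * d i)"
proof -
  define x where "x k = (\<Sum>i<k. c i * d i)" for k
  have tail: "d n dvd x k - x n" if "n \<le> k" for n k
    unfolding x_def using dvd_partial_sum_diff[OF mono that] .
  have "\<exists>y. \<forall>I\<in>range (\<lambda>n. principal (d n)). \<exists>K. \<forall>k\<ge>K. x k - y \<in> I"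
  proof (rule lin_top_completeD[OF complete])
    have "d n dvd x k - x l" if "n \<le> k" "n \<le> l" for n k l
    proof -
      have "x k - x l = (x k - x n) - (x l - x n)" by simp
      then show ?thesis using tail that by (metis dvd_diff)
    qed
    then show "\<forall>I\<in>range (\<lambda>n. principal (d n)). \<exists>K. \<forall>k\<ge>K. \<forall>l\<ge>K. x k - x l \<in> I"
      by (auto simp: principal_iff_dvd)
  qed
  then obtain y where y: "\<And>n. \<exists>K. \<forall>k\<ge>K. d n dvd x k - y"
    by (auto simp: principal_iff_dvd)
  have "d n dvd y - x n" for n
  proof -
    obtain K where "\<forall>k\<ge>K. d n dvd x k - y" using y by blast
    then have "d n dvd x (max K n) - y" by simp
    moreover have "d n dvd x (max K n) - x n" by (rule tail) simp
    ultimately have "d n dvd (x (max K n) - x n) - (x (max K n) - y)"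
      by (rule dvd_diff[rotated])
    then show ?thesis by simp
  qed
  then show ?thesis
    unfolding x_def by blast
qed

lemma uncountable_quot_set_if_complete:
  fixes d :: "nat \<Rightarrow> 'a::comm_ring_1"
  assumes mono: "\<And>n m. n \<le> m \<Longrightarrow> d n dvd d m"
    and strict: "\<And>n. \<not> d (Suc n) dvd d n"
    and c: "\<And>n. d n dvd c"
    and complete: "lin_top_complete (range (\<lambda>n. principal (d n)))"
  shows "uncountable (quot_set (principal (d 0)) (principal c))"
proof -
  define x where "x b k = (\<Sum>n<k. of_bool (n \<in> b) * d n)" for b :: "nat set" and k
  have "\<exists>y. \<forall>n. d n dvd y - x b n" for b
    unfolding x_def by (rule lin_top_complete_series_limit[OF mono complete])
  then obtain y where y: "\<And>b n. d n dvd y b - x b n"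
    by metis
  show ?thesis
  proof (rule uncountable_quot_set_if_incongruent[OF uncountable_UNIV_nat_set])
    show "y b \<in> principal (d 0)" for b
      using y[of 0 b] by (simp add: x_def principal_iff_dvd)
    show "0 \<in> principal c"
      by (simp add: principal_iff_dvd)
    show "b = b'" if "y b - y b' \<in> principal c" for b b'
    proof (rule ccontr)
      assume "b \<noteq> b'"
      then obtain j where j: "(j \<in> b) \<noteq> (j \<in> b')"
        and below_j: "\<And>i. i < j \<Longrightarrow> (i \<in> b) = (i \<in> b')"
        using exists_least_iff[of "\<lambda>j. (j \<in> b) \<noteq> (j \<in> b')"] by blast
      have "x b j = x b' j"
        using below_j unfolding x_def by (intro sum.cong) auto
      then have diff: "x b (Suc j) - x b' (Suc j) = (of_bool (j \<in> b) - of_bool (j \<in> b')) * d j"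
        by (simp add: x_def algebra_simps)
      have "d (Suc j) dvd x b (Suc j) - x b' (Suc j)"
      proof -
        have "x b (Suc j) - x b' (Suc j)
            = (y b' - x b' (Suc j)) - (y b - x b (Suc j)) + (y b - y b')"
          by simp
        moreover have "d (Suc j) dvd y b - y b'"
          using c that by (auto simp: principal_iff_dvd intro: dvd_trans)
        ultimately show ?thesis
          using y by (metis dvd_add dvd_diff)
      qed
      then have "d (Suc j) dvd d j"
        using j unfolding diff by (cases "j \<in> b") simp_all
      with strict show False ..
    qed
  qed
qed

lemma not_lin_top_complete_if_countable_quot_set:
  fixes r :: "'w::wellorder \<Rightarrow> 'a::comm_ring_1"
  assumes om: "is_omega1 TYPE('w)"
    and chain: "\<And>\<sigma> \<tau>. \<tau> < \<sigma> \<Longrightarrow> r \<tau> dvd r \<sigma> \<and> \<not> r \<sigma> dvd r \<tau>"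
    and lim: "is_limit \<delta>" and "\<sigma>0 < \<delta>"
    and countable: "countable (quot_set (principal (r \<sigma>0)) (principal (r \<delta>)))"
  shows "\<not> lin_top_complete {principal (r \<sigma>) | \<sigma>. \<sigma> < \<delta>}"
proof
  assume complete: "lin_top_complete {principal (r \<sigma>) | \<sigma>. \<sigma> < \<delta>}"
  obtain s :: "nat \<Rightarrow> 'w" where s0: "s 0 = \<sigma>0" and "strict_mono s" and below: "\<And>n. s n < \<delta>"
    and cofinal: "\<And>\<beta>. \<beta> < \<delta> \<Longrightarrow> \<exists>n. \<beta> < s n"
    using omega1_limit_cofinal_seq[OF om lim \<open>\<sigma>0 < \<delta>\<close>] by metis
  have r_mono: "r \<tau> dvd r \<sigma>" if "\<tau> \<le> \<sigma>" for \<tau> \<sigma>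
    using chain that by (cases "\<tau> = \<sigma>") auto
  have "uncountable (quot_set (principal (r (s 0))) (principal (r \<delta>)))"
  proof (rule uncountable_quot_set_if_complete)
    show "r (s n) dvd r (s m)" if "n \<le> m" for n m
      using r_mono \<open>strict_mono s\<close> that by (simp add: strict_mono_less_eq)
    show "\<not> r (s (Suc n)) dvd r (s n)" for n
      using chain \<open>strict_mono s\<close> by (simp add: strict_mono_Suc_iff)
    show "r (s n) dvd r \<delta>" for n
      using r_mono below less_imp_le by blast
    show "lin_top_complete (range (\<lambda>n. principal (r (s n))))"
    proof (rule lin_top_complete_cofinal_subfamily[OF complete])
      show "range (\<lambda>n. principal (r (s n))) \<subseteq> {principal (r \<sigma>) | \<sigma>. \<sigma> < \<delta>}"
        using below by blast
      show "\<exists>I'\<in>range (\<lambda>n. principal (r (s n))). I' \<subseteq> I"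
        if I: "I \<in> {principal (r \<sigma>) | \<sigma>. \<sigma> < \<delta>}" for I
      proof -
        obtain \<sigma> where "I = principal (r \<sigma>)" "\<sigma> < \<delta>"
          using I by blast
        moreover obtain n where "\<sigma> < s n"
          using cofinal \<open>\<sigma> < \<delta>\<close> by blast
        moreover have "r \<sigma> dvd r (s n)"
          using chain[OF \<open>\<sigma> < s n\<close>] by blast
        ultimately have "principal (r (s n)) \<subseteq> I"
          by (auto simp: principal_iff_dvd intro: dvd_trans)
        then show ?thesis by blast
      qed
    qed
  qed
  with countable show False
    by (simp add: s0)
qed

lemma Gamma_set_cub_equiv_UNIV:
  fixes r :: "'w::wellorder \<Rightarrow> 'a::idom"
  assumes om: "is_omega1 TYPE('w)"
    and chain: "\<And>\<sigma> \<tau>. \<tau> < \<sigma> \<Longrightarrow> r \<tau> dvd r \<sigma> \<and> \<not> r \<sigma> dvd r \<tau>"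
    and countable: "\<And>\<tau>. \<sigma>0 < \<tau> \<Longrightarrow> countable (quot_set (principal (r \<sigma>0)) (principal (r \<tau>)))"
  shows "cub_equiv (Gamma_set r) UNIV"
proof -
  have "\<exists>\<beta>. \<alpha> < \<beta>" for \<alpha> :: 'w
    using omega1_countable_bounded[OF om, of "{\<alpha>}"] by simp
  then obtain succ :: "'w \<Rightarrow> 'w" where succ: "\<And>\<alpha>. \<alpha> < succ \<alpha>"
    by metis
  let ?C = "{\<delta>. \<sigma>0 < \<delta> \<and> (\<forall>\<alpha><\<delta>. succ \<alpha> < \<delta>)}"
  have "\<delta> \<in> Gamma_set r" if \<delta>: "\<delta> \<in> ?C" for \<delta>
  proof -
    have "\<sigma>0 < \<delta>" using \<delta> by simp
    have "is_limit \<delta>"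
      unfolding is_limit_def using \<delta> succ by blast
    moreover have "\<not> lin_top_complete {principal (r \<sigma>) | \<sigma>. \<sigma> < \<delta>}"
      by (rule not_lin_top_complete_if_countable_quot_set[where r = r, OF om chain
            \<open>is_limit \<delta>\<close> \<open>\<sigma>0 < \<delta>\<close> countable[OF \<open>\<sigma>0 < \<delta>\<close>]])
    ultimately show ?thesis
      unfolding Gamma_set_def by blast
  qed
  then have "Gamma_set r \<inter> ?C = UNIV \<inter> ?C" by blast
  then show ?thesis
    unfolding cub_equiv_def using omega1_cub_closure_points[OF om] by blast
qed

section \<open>Gamma'\<close>

lemma countable_quot_set_representatives:
  fixes A I :: "'a::comm_ring_1 set"
  assumes "countable (quot_set A I)" and "0 \<in> I"
  obtains Reps where "countable Reps" and "\<And>x. x \<in> A \<Longrightarrow> \<exists>y\<in>Reps. x - y \<in> I"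
proof
  show "countable ((\<lambda>c. SOME y. y \<in> c) ` quot_set A I)"
    using assms(1) by simp
  fix x
  assume x: "x \<in> A"
  define c where "c = {y \<in> A. x - y \<in> I}"
  have "c \<in> quot_set A I"
    unfolding c_def quot_set_def using x by blast
  moreover have "x \<in> c"
    unfolding c_def using x \<open>0 \<in> I\<close> by simp
  then have "(SOME y. y \<in> c) \<in> c"
    by (rule someI)
  then have "x - (SOME y. y \<in> c) \<in> I"
    unfolding c_def by blast
  ultimately show "\<exists>y\<in>(\<lambda>c. SOME y. y \<in> c) ` quot_set A I. x - y \<in> I"
    by blast
qed

lemma T_seqs_dvd_diff:
  assumes "u \<in> T_seqs r \<delta>" and "\<sigma> < \<delta>" and "\<tau> < \<delta>"
  shows "r (min \<sigma> \<tau>) dvd u \<sigma> - u \<tau>"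
proof -
  have step: "r \<alpha> dvd u \<beta> - u \<alpha>" if "\<alpha> < \<beta>" "\<beta> < \<delta>" for \<alpha> \<beta>
    using assms(1) that unfolding T_seqs_def by (simp add: principal_iff_dvd)
  consider "\<sigma> < \<tau>" | "\<sigma> = \<tau>" | "\<tau> < \<sigma>"
    using less_linear by blast
  then show ?thesis
  proof cases
    case 1
    then have "min \<sigma> \<tau> = \<sigma>" by simp
    with step[OF 1 \<open>\<tau> < \<delta>\<close>] show ?thesis
      by (metis dvd_minus_iff minus_diff_eq)
  next
    case 3
    then show ?thesis
      using step[OF 3 \<open>\<sigma> < \<delta>\<close>] by simp
  qed simp
qed

lemma not_in_Gamma'_set:
  fixes r :: "'w::wellorder \<Rightarrow> 'a::idom"
  assumes subring: "is_subring (N \<delta>)" and "\<sigma>0 < \<delta>"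
    and reps: "\<And>\<sigma> x. \<sigma>0 < \<sigma> \<Longrightarrow> \<sigma> < \<delta> \<Longrightarrow> r \<sigma>0 dvd x \<Longrightarrow> \<exists>y\<in>N \<delta>. r \<sigma> dvd x - y"
  shows "\<delta> \<notin> Gamma'_set r N"
proof
  assume "\<delta> \<in> Gamma'_set r N"
  then obtain u where u: "u \<in> T_seqs r \<delta>"
    and bad: "\<And>f. f dvd 1 \<Longrightarrow> \<exists>\<sigma><\<delta>. \<not> (\<exists>n\<in>N \<delta>. u \<sigma> * f - n \<in> principal (r \<sigma>))"
    unfolding Gamma'_set_def by blast
  have "u \<sigma>0 dvd 1"
    using u \<open>\<sigma>0 < \<delta>\<close> unfolding T_seqs_def by blast
  then obtain f where f: "1 = u \<sigma>0 * f"
    unfolding dvd_def by blast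
  have one: "1 \<in> N \<delta>" and add: "\<And>a b. a \<in> N \<delta> \<Longrightarrow> b \<in> N \<delta> \<Longrightarrow> a + b \<in> N \<delta>"
    using subring unfolding is_subring_def by blast+
  have matched: "\<exists>n\<in>N \<delta>. r \<sigma> dvd u \<sigma> * f - n" if \<sigma>: "\<sigma> < \<delta>" for \<sigma>
  proof -
    have diff: "u \<sigma> * f - 1 = (u \<sigma> - u \<sigma>0) * f"
      using f by (simp add: algebra_simps)
    have "r (min \<sigma> \<sigma>0) dvd u \<sigma> * f - 1"
      unfolding diff using T_seqs_dvd_diff[OF u \<sigma> \<open>\<sigma>0 < \<delta>\<close>] by simp
    show ?thesis
    proof (cases "\<sigma>0 < \<sigma>")
      case True
      with \<open>r (min \<sigma> \<sigma>0) dvd u \<sigma> * f - 1\<close> have "r \<sigma>0 dvd u \<sigma> * f - 1"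
        by (simp add: min_absorb2 less_imp_le)
      then obtain y where "y \<in> N \<delta>" "r \<sigma> dvd (u \<sigma> * f - 1) - y"
        using reps[OF True \<sigma>] by blast
      then show ?thesis
        using add[OF one] by (metis diff_diff_eq)
    next
      case False
      with \<open>r (min \<sigma> \<sigma>0) dvd u \<sigma> * f - 1\<close> show ?thesis
        using one by (auto simp: min_absorb1 not_less)
    qed
  qed
  have "f dvd 1"
    using f by (metis dvd_triv_right)
  then obtain \<sigma> where "\<sigma> < \<delta>" "\<not> (\<exists>n\<in>N \<delta>. u \<sigma> * f - n \<in> principal (r \<sigma>))"
    using bad by blast
  with matched show False
    by (simp add: principal_iff_dvd)
qed

lemma Gamma'_set_cub_equiv_empty:
  fixes r :: "'w::wellorder \<Rightarrow> 'a::idom"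
  assumes om: "is_omega1 TYPE('w)" and filt: "omega1_filtration N"
    and countable: "\<And>\<tau>. \<sigma>0 < \<tau> \<Longrightarrow> countable (quot_set (principal (r \<sigma>0)) (principal (r \<tau>)))"
  shows "cub_equiv (Gamma'_set r N) {}"
proof -
  have "\<exists>\<beta>. \<sigma>0 < \<sigma> \<longrightarrow> (\<forall>x. r \<sigma>0 dvd x \<longrightarrow> (\<exists>y\<in>N \<beta>. r \<sigma> dvd x - y))" for \<sigma>
  proof (cases "\<sigma>0 < \<sigma>")
    case True
    have "0 \<in> principal (r \<sigma>)" by (simp add: principal_iff_dvd)
    with countable[OF True] obtain Reps where "countable Reps"
      and Reps: "\<And>x. r \<sigma>0 dvd x \<Longrightarrow> \<exists>y\<in>Reps. r \<sigma> dvd x - y"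
      by (rule countable_quot_set_representatives) (simp add: principal_iff_dvd)
    obtain \<beta> where "Reps \<subseteq> N \<beta>"
      using omega1_filtration_countable_subset[OF om filt \<open>countable Reps\<close>] by blast
    then show ?thesis
      using Reps by blast
  qed simp
  then obtain g :: "'w \<Rightarrow> 'w" where
    g: "\<And>\<sigma> x. \<sigma>0 < \<sigma> \<Longrightarrow> r \<sigma>0 dvd x \<Longrightarrow> \<exists>y\<in>N (g \<sigma>). r \<sigma> dvd x - y"
    by metis
  have mono: "\<forall>\<alpha> \<beta>. \<alpha> \<le> \<beta> \<longrightarrow> N \<alpha> \<subseteq> N \<beta>"
    using filt unfolding omega1_filtration_def by (elim conjE)
  have subring: "\<forall>\<alpha>. countable (N \<alpha>) \<and> is_subring (N \<alpha>)"
    using filt unfolding omega1_filtration_def by (elim conjE)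
  let ?C = "{\<delta>. \<sigma>0 < \<delta> \<and> (\<forall>\<alpha><\<delta>. g \<alpha> < \<delta>)}"
  have "\<delta> \<notin> Gamma'_set r N" if \<delta>: "\<delta> \<in> ?C" for \<delta>
  proof (rule not_in_Gamma'_set)
    show "is_subring (N \<delta>)" using subring by blast
    show "\<sigma>0 < \<delta>" using \<delta> by simp
    show "\<exists>y\<in>N \<delta>. r \<sigma> dvd x - y" if "\<sigma>0 < \<sigma>" "\<sigma> < \<delta>" "r \<sigma>0 dvd x" for \<sigma> x
    proof -
      have "N (g \<sigma>) \<subseteq> N \<delta>"
        using mono \<delta> \<open>\<sigma> < \<delta>\<close> by (simp add: less_imp_le)
      then show ?thesis
        using g[OF \<open>\<sigma>0 < \<sigma>\<close> \<open>r \<sigma>0 dvd x\<close>] by blast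
    qed
  qed
  then have "Gamma'_set r N \<inter> ?C = {} \<inter> ?C" by blast
  then show ?thesis
    unfolding cub_equiv_def using omega1_cub_closure_points[OF om] by blast
qed

theorem mainTheorem5:
  fixes J :: "'a::idom fract set"
    and r :: "'w::wellorder \<Rightarrow> 'a"
    and N :: "'w \<Rightarrow> 'a set"
  assumes omega1: "is_omega1 TYPE('w)"
    and val: "valuation_domain TYPE('a)"
    and card_aleph1: "\<exists>h. bij_betw h (UNIV :: 'a set) (UNIV :: 'w set)"
    and J_type: "is_type J"
    and not_cg: "\<not> countably_generated J"
    and repr: "type_repr J r"
    and filt: "omega1_filtration N"
    and ess_ctbl: "essentially_countable r"
  shows "cub_equiv (Gamma'_set r N) {} \<and> cub_equiv (Gamma_set r) UNIV"
proof -
  have "\<exists>\<sigma>0. \<forall>\<tau>>\<sigma>0. countable (quot_set (principal (r \<sigma>0)) (principal (r \<tau>)))"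
    using ess_ctbl unfolding essentially_countable_def essentially_uncountable_def by simp
  then obtain \<sigma>0 where countable:
    "\<And>\<tau>. \<sigma>0 < \<tau> \<Longrightarrow> countable (quot_set (principal (r \<sigma>0)) (principal (r \<tau>)))"
    by blast
  have chain: "\<And>\<sigma> \<tau>. \<tau> < \<sigma> \<Longrightarrow> r \<tau> dvd r \<sigma> \<and> \<not> r \<sigma> dvd r \<tau>"
    using repr unfolding type_repr_def by blast
  show ?thesis
    using Gamma'_set_cub_equiv_empty[where r = r, OF omega1 filt countable]
      Gamma_set_cub_equiv_UNIV[where r = r, OF omega1 chain countable] by blast
qed

end
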